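(* Let $d\geq 3$ and $n\geq d+1$ be integers. Then $\mathcal{F}(C_d(n))$ is $2$-colorable. Moreover, $\tau(\mathcal{F}(C_d(n)))=\left\lceil\frac{n-d}{2}\right\rceil+1$ if $d$ is even, and $\tau(\mathcal{F}(C_d(n)))=2$ if $d$ is odd.
   Context: $C_d(n)$ is the cyclic $d$-polytope on $n$ vertices, the convex hull of $n$ distinct points on the moment curve $t\mapsto(t,t^2,\dots,t^d)$ in $\mathbb{R}^d$, with vertices labelled $1,\dots,n$ in increasing order of parameter. It is simplicial, and its facet hypergraph $\mathcal{F}(C_d(n))$ consists exactly of the $d$-subsets $f\subseteq[n]$ such that for all $i<j$ with $i,j\notin f$, the set $\{k\in f: i<k<j\}$ has even size (Gale's evenness criterion). $2$-colorable means the vertices can be $2$-colored with no monochromatic hyperedge; $\tau$ is the minimum size of a vertex set meeting every hyperedge. *)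

theory Defs
  imports Main
begin

text \<open>Facet hypergraph of the cyclic polytope C_d(n), vertices 1..n, via Gale's evenness criterion.\<close>
definition cyclic_facets :: "nat \<Rightarrow> nat \<Rightarrow> nat set set" where
  "cyclic_facets d n = {f. f \<subseteq> {1..n} \<and> card f = d \<and>
     (\<forall>i j. i \<in> {1..n} \<longrightarrow> j \<in> {1..n} \<longrightarrow> i < j \<longrightarrow> i \<notin> f \<longrightarrow> j \<notin> f \<longrightarrow>
        even (card {k \<in> f. i < k \<and> k < j}))}"

definition two_colorable :: "'a set \<Rightarrow> 'a set set \<Rightarrow> bool" where
  "two_colorable V E = (\<exists>c :: 'a \<Rightarrow> bool. \<forall>e \<in> E. \<exists>x\<in>e. \<exists>y\<in>e. c x \<noteq> c y)"

definition is_transversal :: "'a set \<Rightarrow> 'a set set \<Rightarrow> 'a set \<Rightarrow> bool" where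
  "is_transversal V E T = (T \<subseteq> V \<and> (\<forall>e \<in> E. e \<inter> T \<noteq> {}))"

definition tau :: "'a set \<Rightarrow> 'a set set \<Rightarrow> nat" where
  "tau V E = (LEAST k. \<exists>T. is_transversal V E T \<and> finite T \<and> card T = k)"

end

theory Submission
  imports Defs
begin

(*
  By Gale's criterion, every maximal run of consecutive facet vertices containing neither 1
  nor n has even length. So for d \<ge> 3 every facet contains an interior vertex together with
  a neighbour, and colouring the vertices by parity leaves no facet monochromatic.

  Facets avoiding a set T are built inductively by appending a last vertex, by placing a pair
  {m, m + 1} just below a non-vertex, and by the reflection k \<mapsto> n + 1 - k. This succeeds
  whenever d + 2 |T| \<le> n + 1, unless d is odd and T contains both endpoints; hence the lower
  bounds. Conversely {1, n} meets every facet when d is odd (a facet avoiding both would be a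
  single even run), and for even d so does {1} together with the odd vertices from d + 1 on:
  a facet avoiding them must be {2..d} \<union> {n}, whose run {2..d} is odd.
*)

definition gale_even :: "nat \<Rightarrow> nat set \<Rightarrow> bool" where
  "gale_even n f = (\<forall>i j. i \<in> {1..n} \<longrightarrow> j \<in> {1..n} \<longrightarrow> i < j \<longrightarrow> i \<notin> f \<longrightarrow> j \<notin> f \<longrightarrow>
     even (card {k \<in> f. i < k \<and> k < j}))"

lemma mem_cyclic_facets_iff:
  "f \<in> cyclic_facets d n \<longleftrightarrow> f \<subseteq> {1..n} \<and> card f = d \<and> gale_even n f"
  unfolding cyclic_facets_def gale_even_def by blast

lemma gale_evenD:
  "gale_even n f \<Longrightarrow> 1 \<le> i \<Longrightarrow> j \<le> n \<Longrightarrow> i < j \<Longrightarrow> i \<notin> f \<Longrightarrow> j \<notin> f \<Longrightarrow>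
   even (card {k \<in> f. i < k \<and> k < j})"
  unfolding gale_even_def by auto

lemma cyclic_facetsD:
  assumes "f \<in> cyclic_facets d n"
  shows "f \<subseteq> {1..n}" "card f = d" "gale_even n f"
  using assms by (auto simp: mem_cyclic_facets_iff)

lemma empty_in_cyclic_facets: "{} \<in> cyclic_facets 0 n"
  by (simp add: mem_cyclic_facets_iff gale_even_def)

lemma singleton_first_in_cyclic_facets:
  assumes "1 \<le> n"
  shows "{1} \<in> cyclic_facets 1 n"
  unfolding mem_cyclic_facets_iff gale_even_def
proof (intro conjI allI impI)
  fix i j :: nat assume "i \<in> {1..n}" "i \<notin> {1}"
  then have "{k \<in> {1}. i < k \<and> k < j} = {}" by auto
  then show "even (card {k \<in> {1}. i < k \<and> k < j})" by (metis card.empty even_zero)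
qed (use assms in auto)

lemma gale_even_no_isolated:
  assumes "gale_even n f" "k \<in> f" "2 \<le> k" "k < n"
  shows "k - 1 \<in> f \<or> k + 1 \<in> f"
proof (rule ccontr)
  assume "\<not> ?thesis"
  then have "even (card {x \<in> f. k - 1 < x \<and> x < k + 1})"
    using gale_evenD[OF assms(1), of "k - 1" "k + 1"] assms(3,4) by simp
  moreover have "{x \<in> f. k - 1 < x \<and> x < k + 1} = {k}" using assms(2,3) by auto
  ultimately show False by simp
qed

lemma cyclic_facets_mono:
  assumes "f \<in> cyclic_facets d a" "a \<notin> f" "a \<le> b"
  shows "f \<in> cyclic_facets d b"
proof -
  note f = cyclic_facetsD[OF assms(1)]
  have "even (card {k \<in> f. i < k \<and> k < j})"
    if "1 \<le> i" "i < j" "i \<notin> f" "j \<notin> f" for i j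
  proof (cases "i < a")
    case True
    have "x < a" if "x \<in> f" for x
      using that f(1) assms(2) by (auto simp: subset_iff order.order_iff_strict)
    then have "{k \<in> f. i < k \<and> k < j} = {k \<in> f. i < k \<and> k < min j a}" by auto
    then show ?thesis
      using gale_evenD[OF f(3), of i "min j a"] that assms(2) True by (auto simp: min_def)
  next
    case False
    then have "{k \<in> f. i < k \<and> k < j} = {}" using f(1) by auto
    then show ?thesis by (metis card.empty even_zero)
  qed
  then show ?thesis using f assms(3) by (auto simp: mem_cyclic_facets_iff gale_even_def)
qed

lemma insert_top_cyclic_facets:
  assumes "f \<in> cyclic_facets d n"
  shows "insert (Suc n) f \<in> cyclic_facets (Suc d) (Suc n)"
proof -
  note f = cyclic_facetsD[OF assms(1)]
  then have "card (insert (Suc n) f) = Suc d" by (auto simp: finite_subset card_insert_if)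
  moreover have "gale_even (Suc n) (insert (Suc n) f)"
    unfolding gale_even_def
  proof (intro allI impI)
    fix i j assume ij: "i \<in> {1..Suc n}" "j \<in> {1..Suc n}" "i < j"
      "i \<notin> insert (Suc n) f" "j \<notin> insert (Suc n) f"
    then have "{k \<in> insert (Suc n) f. i < k \<and> k < j} = {k \<in> f. i < k \<and> k < j}" by auto
    then show "even (card {k \<in> insert (Suc n) f. i < k \<and> k < j})"
      using gale_evenD[OF f(3), of i j] ij by auto
  qed
  ultimately show ?thesis using f(1) by (auto simp: mem_cyclic_facets_iff)
qed

lemma insert_pair_cyclic_facets:
  assumes "f \<in> cyclic_facets d m" "m \<notin> f" "1 \<le> m"
  shows "f \<union> {m, m + 1} \<in> cyclic_facets (d + 2) (m + 2)"
proof -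
  note f = cyclic_facetsD[OF assms(1)]
  have fin: "finite f" using f(1) finite_subset by blast
  have "card (f \<union> {m, m + 1}) = d + 2" using f(1,2) fin assms(2) by (subst card_Un_disjoint) auto
  moreover have "gale_even (m + 2) (f \<union> {m, m + 1})"
    unfolding gale_even_def
  proof (intro allI impI)
    fix i j assume ij: "i \<in> {1..m + 2}" "j \<in> {1..m + 2}" "i < j"
      "i \<notin> f \<union> {m, m + 1}" "j \<notin> f \<union> {m, m + 1}"
    show "even (card {k \<in> f \<union> {m, m + 1}. i < k \<and> k < j})"
    proof (cases "j < m")
      case True
      then have "{k \<in> f \<union> {m, m + 1}. i < k \<and> k < j} = {k \<in> f. i < k \<and> k < j}" by auto
      then show ?thesis using gale_evenD[OF f(3), of i j] ij True by auto
    next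
      case False
      then have "j = m + 2" "i < m" using ij by auto
      then have "{k \<in> f \<union> {m, m + 1}. i < k \<and> k < j} = {k \<in> f. i < k \<and> k < m} \<union> {m, m + 1}"
        using f(1) by auto
      moreover have "card ({k \<in> f. i < k \<and> k < m} \<union> {m, m + 1}) = card {k \<in> f. i < k \<and> k < m} + 2"
        using fin by (subst card_Un_disjoint) auto
      ultimately show ?thesis using gale_evenD[OF f(3), of i m] ij \<open>i < m\<close> assms(2) by auto
    qed
  qed
  ultimately show ?thesis using f(1) assms(3) by (auto simp: mem_cyclic_facets_iff)
qed

definition mirror :: "nat \<Rightarrow> nat \<Rightarrow> nat" where
  "mirror n k = Suc n - k"

lemma mirror_mirror: "k \<in> {1..n} \<Longrightarrow> mirror n (mirror n k) = k"
  and mirror_in: "k \<in> {1..n} \<Longrightarrow> mirror n k \<in> {1..n}"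
  and inj_on_mirror: "inj_on (mirror n) {1..n}"
  by (auto simp: mirror_def inj_on_def)

lemma mirror_cyclic_facets:
  assumes "f \<in> cyclic_facets d n"
  shows "mirror n ` f \<in> cyclic_facets d n"
proof -
  note f = cyclic_facetsD[OF assms(1)]
  have "even (card {k \<in> mirror n ` f. i < k \<and> k < j})"
    if ij: "i \<in> {1..n}" "j \<in> {1..n}" "i < j" "i \<notin> mirror n ` f" "j \<notin> mirror n ` f" for i j
  proof -
    have "{k \<in> mirror n ` f. i < k \<and> k < j} = mirror n ` {k \<in> f. mirror n j < k \<and> k < mirror n i}"
      using f(1) ij(1,2) by (force simp: mirror_def)
    moreover have "card (mirror n ` {k \<in> f. mirror n j < k \<and> k < mirror n i})
        = card {k \<in> f. mirror n j < k \<and> k < mirror n i}"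
      using f(1) by (intro card_image inj_on_subset[OF inj_on_mirror]) auto
    moreover have "mirror n i \<notin> f" "mirror n j \<notin> f"
      using ij mirror_mirror by (metis image_eqI)+
    moreover have "1 \<le> mirror n j" "mirror n i \<le> n" "mirror n j < mirror n i"
      using ij by (auto simp: mirror_def)
    ultimately show ?thesis using gale_evenD[OF f(3), of "mirror n j" "mirror n i"] by simp
  qed
  moreover have "card (mirror n ` f) = d"
    using card_image[OF inj_on_subset[OF inj_on_mirror f(1)]] f(2) by simp
  ultimately show ?thesis using f(1) mirror_in by (auto simp: mem_cyclic_facets_iff gale_even_def)
qed

lemma cyclic_facet_avoiding_insert_pair:
  assumes "f \<in> cyclic_facets d m" "f \<inter> insert m T = {}" "1 \<le> m" "m \<notin> T" "m + 1 \<notin> T"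
  shows "\<exists>g \<in> cyclic_facets (d + 2) (m + 2). g \<inter> T = {}"
proof
  show "f \<union> {m, m + 1} \<in> cyclic_facets (d + 2) (m + 2)"
    using insert_pair_cyclic_facets[OF assms(1) _ assms(3)] assms(2) by blast
  show "(f \<union> {m, m + 1}) \<inter> T = {}" using assms(2,4,5) by blast
qed

lemma cyclic_facet_avoiding_last:
  "T \<subseteq> {1..n} \<Longrightarrow> n \<in> T \<Longrightarrow> d + 2 * card T \<le> n + 1 \<Longrightarrow> even d \<or> 1 \<notin> T \<Longrightarrow>
   \<exists>f \<in> cyclic_facets d n. f \<inter> T = {}"
proof (induction n arbitrary: T d rule: less_induct)
  case (less n)
  have finT: "finite T" using less.prems(1) finite_subset by blast
  have cardT: "card T = Suc (card (T - {n}))" using card_Suc_Diff1[OF finT less.prems(2)] by simp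
  have recurse: "\<exists>f \<in> cyclic_facets d n. f \<inter> T = {}"
    if t: "t \<in> T" "t < n" "n \<le> t + 2" "T - {n} \<subseteq> {1..t}" for t
  proof -
    have "d + 2 * card (T - {n}) \<le> t + 1" using less.prems(3) cardT t(3) by linarith
    then obtain f where f: "f \<in> cyclic_facets d t" "f \<inter> (T - {n}) = {}"
      using less.IH[OF t(2,4)] t(1,2) less.prems(4) by auto
    have "t \<notin> f" using f(2) t(1,2) by auto
    then have "f \<in> cyclic_facets d n" using cyclic_facets_mono[OF f(1)] t(2) by simp
    moreover have "n \<notin> f" using cyclic_facetsD(1)[OF f(1)] t(2) by auto
    ultimately show ?thesis using f(2) by blast
  qed
  have below: "T - {n} \<subseteq> {1..n - 2}" if "n - 1 \<notin> T"
  proof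
    fix t assume "t \<in> T - {n}"
    then have "t \<in> {1..n}" "t \<noteq> n" "t \<noteq> n - 1" using that less.prems(1) by auto
    then show "t \<in> {1..n - 2}" by auto
  qed
  consider "d = 0" | "n - 1 \<in> T" | "n - 1 \<notin> T" "n - 2 \<in> T"
    | "d = 1" "n - 1 \<notin> T" "n - 2 \<notin> T" | "2 \<le> d" "n - 1 \<notin> T" "n - 2 \<notin> T"
    by linarith
  then show ?case
  proof cases
    case 1
    then show ?thesis using empty_in_cyclic_facets by blast
  next
    case 2
    then have "T - {n} \<subseteq> {1..n - 1}" "n - 1 < n" using less.prems(1) by auto
    then show ?thesis using recurse[of "n - 1"] 2 by simp
  next
    case 3
    then have "n - 2 < n" using less.prems(1) by auto
    then show ?thesis using recurse[of "n - 2"] below 3 by simp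
  next
    case 4
    then have "1 \<notin> T" "1 \<le> n" using less.prems(1,2,4) by auto
    then show ?thesis using singleton_first_in_cyclic_facets 4(1) by blast
  next
    case 5
    have "3 \<le> n" using 5(1) less.prems(3) cardT by linarith
    define m where "m = n - 2"
    then have m: "n = m + 2" "1 \<le> m" using \<open>3 \<le> n\<close> by auto
    \<comment> \<open>The recursive facet must avoid m, leaving room for the pair {m, m + 1}.\<close>
    define T' where "T' = insert m (T - {n})"
    have T': "T' \<subseteq> {1..m}" "m \<in> T'" "card T' = card T"
      using below 5 m finT cardT by (auto simp: T'_def)
    have "even (d - 2) \<or> 1 \<notin> T'"
    proof (cases "even d")
      case False
      then have "2 \<le> m" using 5(1) less.prems(3) cardT m(1) by presburger
      then show ?thesis using False less.prems(4) by (auto simp: T'_def)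
    qed (use 5(1) in auto)
    moreover have "d - 2 + 2 * card T' \<le> m + 1" using T'(3) less.prems(3) m(1) 5(1) by linarith
    ultimately obtain f where f: "f \<in> cyclic_facets (d - 2) m" "f \<inter> T' = {}"
      using less.IH[of m T' "d - 2"] T'(1,2) m(1) by auto
    have "f \<inter> insert m T = {}"
      using f(2) cyclic_facetsD(1)[OF f(1)] T'(2) less.prems(2) m by (auto simp: T'_def)
    moreover have "m \<notin> T" "m + 1 \<notin> T" using 5(2,3) m(1) by auto
    ultimately have "\<exists>g \<in> cyclic_facets (d - 2 + 2) (m + 2). g \<inter> T = {}"
      using cyclic_facet_avoiding_insert_pair[OF f(1) _ m(2)] by blast
    moreover have "d - 2 + 2 = d" using 5(1) by simp
    ultimately show ?thesis unfolding m(1) by simp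
  qed
qed

lemma cyclic_facet_avoiding_first:
  assumes "T \<subseteq> {1..n}" "1 \<in> T" "d + 2 * card T \<le> n + 1" "even d \<or> n \<notin> T"
  shows "\<exists>f \<in> cyclic_facets d n. f \<inter> T = {}"
proof -
  have "mirror n 1 = n" by (simp add: mirror_def)
  then have T: "mirror n ` T \<subseteq> {1..n}" "n \<in> mirror n ` T"
    using assms(1,2) mirror_in by (blast, metis image_eqI)
  have "card (mirror n ` T) = card T"
    using card_image[OF inj_on_subset[OF inj_on_mirror assms(1)]] .
  moreover have "1 \<notin> mirror n ` T" if "n \<notin> T"
  proof
    assume "1 \<in> mirror n ` T"
    then obtain t where t: "t \<in> T" "Suc n - t = 1" by (auto simp: mirror_def)
    moreover have "t \<le> n" using t(1) assms(1) by auto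
    ultimately have "t = n" by arith
    then show False using t(1) that by blast
  qed
  ultimately have "d + 2 * card (mirror n ` T) \<le> n + 1" "even d \<or> 1 \<notin> mirror n ` T"
    using assms(3,4) by auto
  then obtain f where f: "f \<in> cyclic_facets d n" "f \<inter> mirror n ` T = {}"
    using cyclic_facet_avoiding_last[OF T] by blast
  have "mirror n ` f \<inter> T = {}"
  proof (rule ccontr)
    assume "mirror n ` f \<inter> T \<noteq> {}"
    then obtain x where x: "x \<in> f" "mirror n x \<in> T" by blast
    moreover have "x \<in> {1..n}" using x(1) cyclic_facetsD(1)[OF f(1)] by auto
    ultimately have "x \<in> mirror n ` T" using mirror_mirror by (metis image_eqI)
    then show False using x(1) f(2) by blast
  qed
  then show ?thesis using mirror_cyclic_facets[OF f(1)] by blast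
qed

lemma cyclic_facet_avoiding:
  "T \<subseteq> {1..n} \<Longrightarrow> d \<le> n \<Longrightarrow> d + 2 * card T \<le> n + 1 \<Longrightarrow> even d \<or> 1 \<notin> T \<or> n \<notin> T \<Longrightarrow>
   \<exists>f \<in> cyclic_facets d n. f \<inter> T = {}"
proof (induction n arbitrary: T d)
  case 0
  then show ?case using empty_in_cyclic_facets by auto
next
  case (Suc n)
  consider "d = 0" | "Suc n \<in> T" "even d \<or> 1 \<notin> T" | "1 \<in> T" "even d \<or> Suc n \<notin> T"
    | "1 \<le> d" "Suc n \<notin> T" "1 \<notin> T"
    using Suc.prems(4) by force
  then show ?case
  proof cases
    case 1
    then show ?thesis using empty_in_cyclic_facets by blast
  next
    case 2
    then show ?thesis using cyclic_facet_avoiding_last Suc.prems(1,3) by blast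
  next
    case 3
    then show ?thesis using cyclic_facet_avoiding_first Suc.prems(1,3) by blast
  next
    case 4
    then have "T \<subseteq> {1..n}" using Suc.prems(1) by (auto simp: subset_iff le_Suc_eq)
    moreover have "d - 1 \<le> n" "d - 1 + 2 * card T \<le> n + 1" using Suc.prems(2,3) 4 by auto
    ultimately obtain f where f: "f \<in> cyclic_facets (d - 1) n" "f \<inter> T = {}"
      using Suc.IH[of T "d - 1"] 4 by blast
    have "insert (Suc n) f \<in> cyclic_facets d (Suc n)"
      using insert_top_cyclic_facets[OF f(1)] 4 by simp
    moreover have "insert (Suc n) f \<inter> T = {}" using f(2) 4 by simp
    ultimately show ?thesis by blast
  qed
qed

lemma transversal_cyclic_facets_card_gt:
  assumes "is_transversal {1..n} (cyclic_facets d n) T" "d \<le> n" "even d \<or> 1 \<notin> T \<or> n \<notin> T"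
  shows "n + 1 < d + 2 * card T"
proof (rule ccontr)
  assume "\<not> ?thesis"
  then have "d + 2 * card T \<le> n + 1" by linarith
  moreover have "T \<subseteq> {1..n}" using assms(1) unfolding is_transversal_def by blast
  ultimately obtain f where "f \<in> cyclic_facets d n" "f \<inter> T = {}"
    using cyclic_facet_avoiding assms(2,3) by blast
  then show False using assms(1) unfolding is_transversal_def by blast
qed

lemma tau_eqI:
  assumes "is_transversal V E T" "finite T" "card T = k"
    and "\<And>T. is_transversal V E T \<Longrightarrow> finite T \<Longrightarrow> k \<le> card T"
  shows "tau V E = k"
  unfolding tau_def by (rule Least_equality) (use assms in blast)+

lemma endpoints_transversal_cyclic_facets_odd:
  assumes "odd d" "n \<ge> 2"
  shows "is_transversal {1..n} (cyclic_facets d n) {1, n}"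
  unfolding is_transversal_def
proof (intro conjI ballI)
  show "{1, n} \<subseteq> {1..n}" using assms by auto
  fix f assume "f \<in> cyclic_facets d n"
  note f = cyclic_facetsD[OF this]
  show "f \<inter> {1, n} \<noteq> {}"
  proof
    assume "f \<inter> {1, n} = {}"
    moreover from this have "{k \<in> f. 1 < k \<and> k < n} = f" using f(1) by fastforce
    ultimately show False using gale_evenD[OF f(3), of 1 n] f(2) assms by auto
  qed
qed

lemma card_odd_atLeastAtMost:
  assumes "even d"
  shows "card {k \<in> {d + 1..n}. odd k} = (n - d + 1) div 2"
proof -
  have "{k \<in> {d + 1..n}. odd k} = (\<lambda>i. d + 1 + 2 * i) ` {..<(n - d + 1) div 2}"
  proof (intro equalityI subsetI)
    fix k assume "k \<in> {k \<in> {d + 1..n}. odd k}"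
    then have "k = d + 1 + 2 * ((k - d - 1) div 2)" "(k - d - 1) div 2 < (n - d + 1) div 2"
      using assms by (auto elim!: oddE evenE)
    then show "k \<in> (\<lambda>i. d + 1 + 2 * i) ` {..<(n - d + 1) div 2}" by blast
  qed (use assms in auto)
  then show ?thesis by (simp add: card_image inj_on_def)
qed

lemma odd_tail_transversal_cyclic_facets:
  assumes "even d" "0 < d" "d + 1 \<le> n"
  shows "is_transversal {1..n} (cyclic_facets d n) (insert 1 {k \<in> {d + 1..n}. odd k})"
  unfolding is_transversal_def
proof (intro conjI ballI)
  let ?T = "insert 1 {k \<in> {d + 1..n}. odd k}"
  show "?T \<subseteq> {1..n}" using assms by auto
  fix f assume "f \<in> cyclic_facets d n"
  note f = cyclic_facetsD[OF this]
  show "f \<inter> ?T \<noteq> {}"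
  proof
    assume avoid: "f \<inter> ?T = {}"
    have "f \<subseteq> {2..d} \<union> {n}"
    proof
      fix k assume k: "k \<in> f"
      show "k \<in> {2..d} \<union> {n}"
      proof (rule ccontr)
        assume "k \<notin> {2..d} \<union> {n}"
        moreover have "k \<in> {1..n}" "k \<notin> ?T" using k f(1) avoid by auto
        ultimately have k': "2 \<le> k" "k < n" "even k" "d < k" by auto
        then have "d + 2 \<le> k" using assms(1) by presburger
        then have "k - 1 \<in> ?T" "k + 1 \<in> ?T" using k' by auto
        then show False using gale_even_no_isolated[OF f(3) k k'(1,2)] avoid by blast
      qed
    qed
    moreover have "card ({2..d} \<union> {n}) = d" using assms(2,3) by simp
    ultimately have "f = {2..d} \<union> {n}" using f(2) by (intro card_subset_eq) auto
    then have "{k \<in> f. 1 < k \<and> k < d + 1} = {2..d}" using assms by auto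
    moreover have "1 \<notin> f" "d + 1 \<notin> f" using avoid assms by auto
    ultimately show False using gale_evenD[OF f(3), of 1 "d + 1"] assms by auto
  qed
qed

lemma tau_cyclic_facets_even:
  assumes "even d" "0 < d" "d + 1 \<le> n"
  shows "tau {1..n} (cyclic_facets d n) = (n - d + 1) div 2 + 1"
proof (rule tau_eqI)
  let ?T = "insert 1 {k \<in> {d + 1..n}. odd k}"
  show "is_transversal {1..n} (cyclic_facets d n) ?T"
    using odd_tail_transversal_cyclic_facets assms .
  have "1 \<notin> {k \<in> {d + 1..n}. odd k}" using assms(2) by auto
  then show "card ?T = (n - d + 1) div 2 + 1" using card_odd_atLeastAtMost[OF assms(1)] by simp
  fix T assume "is_transversal {1..n} (cyclic_facets d n) T"
  then have "n + 1 < d + 2 * card T"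
    using transversal_cyclic_facets_card_gt assms(1,3) by simp
  then show "(n - d + 1) div 2 + 1 \<le> card T" using assms(3) by presburger
qed simp

lemma tau_cyclic_facets_odd:
  assumes "odd d" "d + 1 \<le> n"
  shows "tau {1..n} (cyclic_facets d n) = 2"
proof -
  have "n \<ge> 2" using assms by presburger
  then have "card {1, n} = 2" by simp
  show ?thesis
  proof (rule tau_eqI[OF endpoints_transversal_cyclic_facets_odd[OF assms(1) \<open>n \<ge> 2\<close>]])
    fix T assume T: "is_transversal {1..n} (cyclic_facets d n) T" "finite T"
    show "2 \<le> card T"
    proof (rule ccontr)
      assume "\<not> 2 \<le> card T"
      moreover have "card {1, n} \<le> card T" if "{1, n} \<subseteq> T" using card_mono[OF T(2) that] .
      ultimately have "1 \<notin> T \<or> n \<notin> T" using \<open>card {1, n} = 2\<close> by auto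
      then have "n + 1 < d + 2 * card T"
        using transversal_cyclic_facets_card_gt[OF T(1)] assms(2) by simp
      then show False using \<open>\<not> 2 \<le> card T\<close> assms(2) by linarith
    qed
  qed (use \<open>card {1, n} = 2\<close> in simp_all)
qed

lemma two_colorable_cyclic_facets:
  assumes "d \<ge> 3"
  shows "two_colorable {1..n} (cyclic_facets d n)"
  unfolding two_colorable_def
proof (intro exI[of _ even] ballI)
  fix f assume "f \<in> cyclic_facets d n"
  note f = cyclic_facetsD[OF this]
  have "card {1, n} \<le> (2::nat)" by (cases "n = 1") auto
  then have "\<not> f \<subseteq> {1, n}"
    using card_mono[of "{1, n}" f] f(2) assms by auto
  then obtain k where "k \<in> f" "k \<notin> {1, n}" by blast
  moreover from this have "k \<in> {1..n}" using f(1) by blast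
  ultimately have k: "k \<in> f" "2 \<le> k" "k < n" by auto
  then have "even (k - 1) \<noteq> even k" "even (k + 1) \<noteq> even k" by (cases k; simp)+
  then show "\<exists>x\<in>f. \<exists>y\<in>f. even x \<noteq> even y"
    using gale_even_no_isolated[OF f(3) k] k(1) by blast
qed

theorem proposition3p4:
  fixes d n :: nat
  assumes "d \<ge> 3" and "n \<ge> d + 1"
  shows "two_colorable {1..n} (cyclic_facets d n)
    \<and> (even d \<longrightarrow> tau {1..n} (cyclic_facets d n) = (n - d + 1) div 2 + 1)
    \<and> (odd d \<longrightarrow> tau {1..n} (cyclic_facets d n) = 2)"
  using two_colorable_cyclic_facets tau_cyclic_facets_even tau_cyclic_facets_odd assms by simp

end
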